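(* Let $\ell$ be a line of $\mathbb{P}^2$ defined over $\mathbb{F}_q$ and $P$ an $\mathbb{F}_q$-point of $\ell$. Then the set $S_{\ell\setminus P}^{\emptyset,\ell}=R_{\mathrm{hom}}\setminus S_{\ell\setminus P}^{\ell}$ of $f$ such that $C_f$ meets $\ell$ with multiplicity at least $2$ (i.e. $C_f\cap \ell$ is not smooth of dimension $0$) at some closed point of $\ell$ other than $P$ has density $q^{-1}$.
   Context: Let $q$ be a prime power, $R_{\mathrm{hom}}=\bigcup_{d\ge1}R_d$ with $R_d\subseteq\mathbb{F}_q[x,y,z]$ the homogeneous degree-$d$ polynomials (including $0$), $\mu(\mathcal{P})=\lim_{d\to\infty}|\mathcal{P}\cap R_d|/|R_d|$, $C_f=\{f=0\}\subseteq\mathbb{P}^2$. For quasi-projective $U\subseteq X\subseteq\mathbb{P}^2$ with $X$ smooth, $S_U^X=\{f: C_f\cap X\text{ is smooth of dimension }\dim X-1\text{ at every closed point of }U\}$ (empty scheme counts as smooth of any dimension). *)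

theory Defs
  imports Complex_Main "HOL-Computational_Algebra.Polynomial"
begin

text \<open>A homogeneous polynomial of degree d in F[x,y,z] is represented by its coefficient
function on exponent triples (i,j,k) (monomial x^i y^j z^k), vanishing off i+j+k = d.\<close>
type_synonym 'a hpoly = "nat \<times> nat \<times> nat \<Rightarrow> 'a"

definition hom_polys :: "nat \<Rightarrow> ('a::zero) hpoly set" where
  "hom_polys d = {f. \<forall>i j k. i + j + k \<noteq> d \<longrightarrow> f (i, j, k) = 0}"

definition lin_indep2 :: "('a::field) \<times> 'a \<times> 'a \<Rightarrow> 'a \<times> 'a \<times> 'a \<Rightarrow> bool" where
  "lin_indep2 u v = (\<forall>a b. a * fst u + b * fst v = 0 \<and> a * fst (snd u) + b * fst (snd v) = 0
      \<and> a * snd (snd u) + b * snd (snd v) = 0 \<longrightarrow> a = 0 \<and> b = 0)"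

text \<open>Restriction of the degree-d form f to the line spanned by u, v, in the affine chart
t = 1 of the parametrisation (s:t) |-> s u + t v, i.e. the univariate polynomial
s |-> f(s u + v). The point P = [u] is the unique point of the line outside this chart.\<close>
definition restrict_line :: "('a::comm_ring_1) hpoly \<Rightarrow> nat \<Rightarrow> 'a \<times> 'a \<times> 'a \<Rightarrow> 'a \<times> 'a \<times> 'a \<Rightarrow> 'a poly" where
  "restrict_line f d u v =
     (\<Sum>i\<le>d. \<Sum>j\<le>d - i. smult (f (i, j, d - i - j))
        ([:fst v, fst u:] ^ i * [:fst (snd v), fst (snd u):] ^ j
         * [:snd (snd v), snd (snd u):] ^ (d - i - j)))"

text \<open>C_f meets the line with multiplicity at least 2 at some closed point other than P
(closed points of the chart = monic irreducible polynomials in s); this includes the case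
that f vanishes identically on the line.\<close>
definition mult2_off_P :: "nat \<Rightarrow> ('a::field) \<times> 'a \<times> 'a \<Rightarrow> 'a \<times> 'a \<times> 'a \<Rightarrow> 'a hpoly \<Rightarrow> bool" where
  "mult2_off_P d u v f = (\<exists>p :: 'a poly. irreducible p \<and> p ^ 2 dvd restrict_line f d u v)"

end

theory Submission
  imports Defs "HOL-Computational_Algebra.Squarefree" "HOL-Library.Function_Algebras"
begin

(* Restriction to the line, parametrised in the chart t = 1 by s |-> s u + v, is a linear map
   from forms of degree d onto the polynomials of degree at most d in s: it is onto because
   both s and 1 are restrictions of linear forms. Its fibres are cosets of the kernel, so the
   proportion in question equals the proportion of polynomials of degree at most d that are not
   squarefree (0 included). Writing each nonzero g uniquely as a^2 b with a monic and b
   squarefree gives q^(d+1) - 1 = sum_k q^k S(d - 2k) for the number S(m) of squarefree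
   polynomials of degree at most m, whence S(d) = q^(d+1) - q^d + q - 1 for d >= 2. So
   q^d - q + 1 of the q^(d+1) polynomials are not squarefree, a proportion tending to 1/q. *)

section \<open>Irreducible polynomials over a field\<close>

lemma irreducible_divisor_exists:
  fixes g :: "'a::field poly"
  assumes "degree g > 0"
  shows "\<exists>p. irreducible p \<and> p dvd g"
  using assms
proof (induction "degree g" arbitrary: g rule: less_induct)
  case less
  have "g \<noteq> 0" using less.prems by auto
  then have "\<not> is_unit g" using less.prems is_unit_iff_degree[of g] by simp
  show ?case
  proof (cases "irreducible g")
    case False
    then obtain a b where g: "g = a * b" and "\<not> is_unit a" "\<not> is_unit b"
      using \<open>g \<noteq> 0\<close> \<open>\<not> is_unit g\<close> by (auto simp: irreducible_def)
    moreover have "a \<noteq> 0" "b \<noteq> 0" using \<open>g \<noteq> 0\<close> g by auto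
    ultimately have "degree a > 0" "degree b > 0" using is_unit_iff_degree by auto
    then have "degree a < degree g" using g \<open>a \<noteq> 0\<close> \<open>b \<noteq> 0\<close> by (simp add: degree_mult_eq)
    with less.hyps \<open>degree a > 0\<close> obtain p where "irreducible p" "p dvd a" by blast
    then show ?thesis using g by auto
  qed auto
qed

lemma irreducible_exists: "\<exists>p :: 'a::field poly. irreducible p"
  using irreducible_divisor_exists[of "[:0, 1:]"] by auto

lemma dvd_mod_mult:
  fixes x y b :: "'a::idom_modulo"
  assumes "d dvd x * b" "d dvd y * b"
  shows "d dvd x mod y * b"
proof -
  have "x mod y = x - x div y * y" by (simp add: minus_div_mult_eq_mod)
  then have "x mod y * b = x * b - x div y * (y * b)" by (simp add: left_diff_distrib mult.assoc)
  then show ?thesis using assms by simp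
qed

(* One step of the Euclidean algorithm: p mod a satisfies the same hypotheses as a and has
   smaller degree. *)
lemma irreducible_dvd_mult_small_degree:
  fixes p a b :: "'a::field poly"
  assumes "irreducible p" "p dvd a * b" "a \<noteq> 0" "degree a < degree p"
  shows "p dvd b"
  using assms(2-4)
proof (induction "degree a" arbitrary: a rule: less_induct)
  case less
  show ?case
  proof (cases "degree a = 0")
    case True
    then have "is_unit a" using is_unit_iff_degree[OF less.prems(2)] by simp
    then show ?thesis using less.prems(1) by (simp add: dvd_mult_unit_iff')
  next
    case False
    have "\<not> a dvd p"
    proof
      assume "a dvd p"
      then obtain c where p: "p = a * c" by (elim dvdE)
      have "\<not> is_unit a" using False is_unit_iff_degree[OF less.prems(2)] by simp
      moreover have "c \<noteq> 0" using p \<open>irreducible p\<close> by auto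
      then have "degree p = degree a + degree c" using p less.prems(2) by (simp add: degree_mult_eq)
      then have "\<not> is_unit c"
        using less.prems(3) is_unit_iff_degree[OF \<open>c \<noteq> 0\<close>] by simp
      ultimately show False using irreducibleD[OF \<open>irreducible p\<close> p] by blast
    qed
    define r where "r = p mod a"
    have "r \<noteq> 0" using \<open>\<not> a dvd p\<close> r_def by (simp add: mod_eq_0_iff_dvd)
    have "degree r < degree a" using degree_mod_less' less.prems(2) \<open>r \<noteq> 0\<close> r_def by blast
    have "p dvd r * b" unfolding r_def using less.prems(1) by (simp add: dvd_mod_mult)
    moreover have "degree r < degree p" using \<open>degree r < degree a\<close> less.prems(3) by simp
    ultimately show ?thesis using less.hyps[OF \<open>degree r < degree a\<close>] \<open>r \<noteq> 0\<close> by blast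
  qed
qed

lemma irreducible_dvd_multD:
  fixes p a b :: "'a::field poly"
  assumes "irreducible p" "p dvd a * b"
  shows "p dvd a \<or> p dvd b"
proof (cases "p dvd a")
  case False
  have "p \<noteq> 0" using assms(1) by auto
  have "p dvd a mod p * b" using assms(2) by (simp add: dvd_mod_mult)
  moreover have "a mod p \<noteq> 0" using False by (simp add: mod_eq_0_iff_dvd)
  ultimately have "p dvd b"
    using irreducible_dvd_mult_small_degree[OF assms(1)] degree_mod_less' \<open>p \<noteq> 0\<close> by blast
  then show ?thesis ..
qed simp

lemma not_squarefree_poly_iff:
  fixes g :: "'a::field poly"
  shows "\<not> squarefree g \<longleftrightarrow> (\<exists>p. irreducible p \<and> p ^ 2 dvd g)"
proof
  assume "\<not> squarefree g"
  then obtain x where x: "x ^ 2 dvd g" "\<not> is_unit x" by (elim not_squarefreeE)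
  show "\<exists>p. irreducible p \<and> p ^ 2 dvd g"
  proof (cases "x = 0")
    case True
    then show ?thesis using x irreducible_exists by auto
  next
    case False
    then obtain p where "irreducible p" "p dvd x"
      using x(2) is_unit_iff_degree irreducible_divisor_exists by blast
    then show ?thesis using x(1) by (meson dvd_power_same dvd_trans)
  qed
qed (meson not_squarefreeI irreducible_not_unit)

section \<open>Counting squarefree polynomials\<close>

lemma square_squarefree_decomposition:
  fixes g :: "'a::field poly"
  assumes "g \<noteq> 0"
  shows "\<exists>a b. lead_coeff a = 1 \<and> squarefree b \<and> g = a ^ 2 * b"
  using assms
proof (induction "degree g" arbitrary: g rule: less_induct)
  case less
  show ?case
  proof (cases "squarefree g")
    case False
    then obtain x where x: "x ^ 2 dvd g" "\<not> is_unit x" by (elim not_squarefreeE)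
    have "x \<noteq> 0" using x(1) less.prems by auto
    define m where "m = smult (inverse (lead_coeff x)) x"
    have m: "lead_coeff m = 1" "x = smult (lead_coeff x) m"
      using \<open>x \<noteq> 0\<close> by (simp_all add: m_def lead_coeff_smult)
    then have "m dvd x" by (metis dvd_triv_right mult_smult_left mult_1)
    then have "m ^ 2 dvd g" using x(1) by (meson dvd_power_same dvd_trans)
    then obtain h where g: "g = m ^ 2 * h" by (elim dvdE)
    have "h \<noteq> 0" "m \<noteq> 0" using g less.prems m(1) by auto
    have "degree m > 0"
      using x(2) is_unit_iff_degree[OF \<open>x \<noteq> 0\<close>] \<open>x \<noteq> 0\<close> by (simp add: m_def)
    then have "degree h < degree g" using g \<open>h \<noteq> 0\<close> \<open>m \<noteq> 0\<close> by (simp add: degree_mult_eq degree_power_eq)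
    with less.hyps \<open>h \<noteq> 0\<close> obtain a b where "lead_coeff a = 1" "squarefree b" "h = a ^ 2 * b" by blast
    then show ?thesis using g m(1)
      by (intro exI[of _ "m * a"] exI[of _ b]) (simp add: lead_coeff_mult power_mult_distrib)
  qed (auto intro: exI[of _ 1])
qed

lemma square_squarefree_decomposition_unique:
  fixes a c :: "'a::field poly"
  assumes "a ^ 2 * b = c ^ 2 * e" "squarefree b" "squarefree e" "lead_coeff a = lead_coeff c"
  shows "a = c"
  using assms(1,4)
proof (induction "degree a" arbitrary: a c rule: less_induct)
  case less
  show ?case
  proof (cases "degree a = 0")
    case True
    have "degree c = 0"
    proof (rule ccontr)
      assume "degree c \<noteq> 0"
      then obtain p where p: "irreducible p" "p dvd c" using irreducible_divisor_exists by blast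
      have "c \<noteq> 0" "a \<noteq> 0" using \<open>degree c \<noteq> 0\<close> less.prems(2) by auto
      then have "is_unit (a ^ 2)" using True by (simp add: is_unit_power_iff is_unit_iff_degree)
      moreover have "p ^ 2 dvd a ^ 2 * b" using less.prems(1) p(2) by (simp add: dvd_power_same)
      ultimately have "p ^ 2 dvd b" by (simp add: dvd_mult_unit_iff')
      then show False using squarefreeD[OF assms(2)] irreducible_not_unit[OF p(1)] by blast
    qed
    then show ?thesis using True less.prems(2) by (metis degree_0_id)
  next
    case deg_a: False
    then obtain p where p: "irreducible p" "p dvd a" using irreducible_divisor_exists by blast
    then obtain a' where a: "a = p * a'" by (elim dvdE)
    have "p \<noteq> 0" using p(1) by auto
    show ?thesis
    proof (cases "p dvd c")
      case True
      then obtain c' where c: "c = p * c'" by (elim dvdE)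
      have "p ^ 2 * (a' ^ 2 * b) = p ^ 2 * (c' ^ 2 * e)"
        using less.prems(1) a c by (simp add: power_mult_distrib algebra_simps)
      then have "a' ^ 2 * b = c' ^ 2 * e" using \<open>p \<noteq> 0\<close> by simp
      moreover have "lead_coeff a' = lead_coeff c'"
        using less.prems(2) a c \<open>p \<noteq> 0\<close> by (simp add: lead_coeff_mult)
      moreover have "degree a' < degree a"
      proof -
        have "a' \<noteq> 0" using a deg_a by auto
        moreover have "degree p > 0"
          using irreducible_not_unit[OF p(1)] is_unit_iff_degree[OF \<open>p \<noteq> 0\<close>] by simp
        ultimately show ?thesis using a \<open>p \<noteq> 0\<close> by (simp add: degree_mult_eq)
      qed
      ultimately have "a' = c'" by (rule less.hyps[rotated])
      then show ?thesis using a c by simp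
    next
      case False
      have "c * (c * e) = p * (a' * a * b)" using less.prems(1) a by (simp add: power2_eq_square mult_ac)
      then have "p dvd c * (c * e)" by simp
      then have "p dvd e" using False irreducible_dvd_multD[OF p(1)] by blast
      then obtain e' where e: "e = p * e'" by (elim dvdE)
      have "p * (a' ^ 2 * b) = c * (c * e')"
        using less.prems(1) a e \<open>p \<noteq> 0\<close> by (simp add: power2_eq_square algebra_simps)
      then have "p dvd c * (c * e')" by (metis dvd_triv_left)
      then have "p dvd e'" using False irreducible_dvd_multD[OF p(1)] by blast
      then have "p ^ 2 dvd e" using e by (simp add: power2_eq_square)
      then show ?thesis using squarefreeD[OF assms(3)] irreducible_not_unit[OF p(1)] by blast
    qed
  qed
qed

lemma card_pCons_split:
  fixes P Q :: "'a::{finite,zero} poly \<Rightarrow> bool"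
  assumes "\<And>a q. P (pCons a q) \<longleftrightarrow> Q q"
  shows "card {p. P p} = card (UNIV :: 'a set) * card {q. Q q}"
proof -
  have "{p. P p} = (\<lambda>(a, q). pCons a q) ` (UNIV \<times> {q. Q q})"
  proof (rule set_eqI)
    fix p :: "'a poly"
    show "p \<in> {p. P p} \<longleftrightarrow> p \<in> (\<lambda>(a, q). pCons a q) ` (UNIV \<times> {q. Q q})"
      by (cases p) (auto simp: assms)
  qed
  moreover have "inj_on (\<lambda>(a, q). pCons a q) (UNIV \<times> {q. Q q})" by (auto intro: inj_onI)
  ultimately show ?thesis by (simp add: card_image card_cartesian_product)
qed

lemma card_degree_le: "card {p :: 'a::{finite,zero} poly. degree p \<le> n} = card (UNIV :: 'a set) ^ Suc n"
proof (induction n)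
  case 0
  have "card {p :: 'a poly. degree p \<le> 0} = card (UNIV :: 'a set) * card {q :: 'a poly. q = 0}"
    by (rule card_pCons_split) simp
  then show ?case by simp
next
  case (Suc n)
  have "card {p :: 'a poly. degree p \<le> Suc n} = card (UNIV :: 'a set) * card {q :: 'a poly. degree q \<le> n}"
    by (rule card_pCons_split) simp
  then show ?case using Suc.IH by simp
qed

lemma finite_degree_le: "finite {p :: 'a::{finite,zero} poly. degree p \<le> n}"
  using card_degree_le[of n, where 'a='a] by (intro card_ge_0_finite) (simp add: finite_UNIV_card_ge_0)

lemma card_monic:
  "card {p :: 'a::{finite,comm_semiring_1} poly. lead_coeff p = 1 \<and> degree p = k} = card (UNIV :: 'a set) ^ k"
proof (induction k)
  case 0
  have "{p :: 'a poly. lead_coeff p = 1 \<and> degree p = 0} = {1}"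
    by (auto elim: degree_eq_zeroE)
  then show ?case by simp
next
  case (Suc k)
  have "card {p :: 'a poly. lead_coeff p = 1 \<and> degree p = Suc k}
      = card (UNIV :: 'a set) * card {q :: 'a poly. lead_coeff q = 1 \<and> degree q = k}"
    by (rule card_pCons_split) auto
  then show ?case using Suc.IH by simp
qed

lemma degree_square_mult_squarefree:
  fixes a b :: "'a::field poly"
  assumes "lead_coeff a = 1" "squarefree b"
  shows "degree (a ^ 2 * b) = 2 * degree a + degree b"
proof -
  have "a \<noteq> 0" "b \<noteq> 0" using assms by auto
  then show ?thesis by (simp add: degree_mult_eq degree_power_eq)
qed

lemma bij_betw_square_squarefree:
  "bij_betw (\<lambda>(k, a, b). a ^ 2 * b)
     (SIGMA k:{..d div 2}. {a. lead_coeff a = 1 \<and> degree a = k} \<times> {b. degree b \<le> d - 2 * k \<and> squarefree b})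
     {g :: 'a::field poly. degree g \<le> d \<and> g \<noteq> 0}"
  (is "bij_betw ?mult ?D _")
proof (rule bij_betw_imageI)
  show "inj_on ?mult ?D"
  proof (rule inj_onI)
    fix x y assume x: "x \<in> ?D" and y: "y \<in> ?D" and eq_xy: "?mult x = ?mult y"
    obtain k k' :: nat and a b a' b' :: "'a poly" where xy: "x = (k, a, b)" "y = (k', a', b')"
      by (cases x, cases y)
    have eq: "a ^ 2 * b = a' ^ 2 * b'" using eq_xy xy by simp
    have "lead_coeff a = 1" "lead_coeff a' = 1" "squarefree b" "squarefree b'"
      "k = degree a" "k' = degree a'" using x y xy by auto
    moreover from this have "a = a'"
      using square_squarefree_decomposition_unique[OF eq] by simp
    ultimately show "x = y" using eq xy by auto
  qed
  show "?mult ` ?D = {g. degree g \<le> d \<and> g \<noteq> 0}"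
  proof (rule set_eqI, rule iffI)
    fix g :: "'a poly" assume "g \<in> ?mult ` ?D"
    then show "g \<in> {g. degree g \<le> d \<and> g \<noteq> 0}" by (auto simp: degree_square_mult_squarefree)
  next
    fix g :: "'a poly" assume g: "g \<in> {g. degree g \<le> d \<and> g \<noteq> 0}"
    then obtain a b where ab: "lead_coeff a = 1" "squarefree b" "g = a ^ 2 * b"
      using square_squarefree_decomposition by blast
    then have "(degree a, a, b) \<in> ?D" using g by (auto simp: degree_square_mult_squarefree)
    then show "g \<in> ?mult ` ?D" using ab(3) by force
  qed
qed

lemma card_nonzero_degree_le_eq_sum:
  "card {g :: 'a::{finite,field} poly. degree g \<le> d \<and> g \<noteq> 0}
     = (\<Sum>k\<le>d div 2. card (UNIV :: 'a set) ^ k * card {b :: 'a poly. degree b \<le> d - 2 * k \<and> squarefree b})"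
proof -
  define M where "M k = {a :: 'a poly. lead_coeff a = 1 \<and> degree a = k}" for k
  define S where "S m = {b :: 'a poly. degree b \<le> m \<and> squarefree b}" for m
  have "card {g :: 'a poly. degree g \<le> d \<and> g \<noteq> 0} = card (SIGMA k:{..d div 2}. M k \<times> S (d - 2 * k))"
    using bij_betw_square_squarefree[of d, where 'a='a] unfolding M_def S_def
    by (simp add: bij_betw_same_card)
  also have "\<dots> = (\<Sum>k\<le>d div 2. card (M k) * card (S (d - 2 * k)))"
    by (subst card_SigmaI) (auto simp: card_cartesian_product M_def S_def
        intro: finite_subset[OF _ finite_degree_le])
  finally show ?thesis by (simp add: M_def S_def card_monic)
qed

lemma card_nonzero_degree_le:
  "card {g :: 'a::{finite,zero} poly. degree g \<le> d \<and> g \<noteq> 0} = card (UNIV :: 'a set) ^ Suc d - 1"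
proof -
  have "{g :: 'a poly. degree g \<le> d \<and> g \<noteq> 0} = {g. degree g \<le> d} - {0}" by auto
  then show ?thesis by (simp add: card_Diff_singleton finite_degree_le card_degree_le)
qed

lemma card_squarefree_degree_le:
  fixes n :: nat
  defines "q \<equiv> real (card (UNIV :: 'a::{finite,field} set))"
  shows "real (card {b :: 'a poly. degree b \<le> n + 2 \<and> squarefree b}) = q ^ (n + 3) - q ^ (n + 2) + q - 1"
proof -
  define S where "S m = real (card {b :: 'a poly. degree b \<le> m \<and> squarefree b})" for m
  have sum_eq: "q ^ Suc m - 1 = (\<Sum>k\<le>m div 2. q ^ k * S (m - 2 * k))" for m
  proof -
    have "q ^ Suc m - 1 = real (card {g :: 'a poly. degree g \<le> m \<and> g \<noteq> 0})"
      using finite_UNIV_card_ge_0[where 'a='a]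
      by (simp add: card_nonzero_degree_le q_def of_nat_diff del: power_Suc)
    also have "\<dots> = (\<Sum>k\<le>m div 2. q ^ k * S (m - 2 * k))"
      unfolding card_nonzero_degree_le_eq_sum by (simp add: S_def q_def)
    finally show ?thesis .
  qed
  have "q ^ Suc (Suc (Suc n)) - 1 = S (Suc (Suc n)) + q * (\<Sum>k\<le>n div 2. q ^ k * S (n - 2 * k))"
  proof -
    have "Suc (Suc n) div 2 = Suc (n div 2)" by simp
    then show ?thesis unfolding sum_eq[of "Suc (Suc n)"]
      by (simp only: sum.atMost_Suc_shift) (simp add: sum_distrib_left mult.assoc)
  qed
  also have "(\<Sum>k\<le>n div 2. q ^ k * S (n - 2 * k)) = q ^ Suc n - 1"
    by (rule sum_eq[symmetric])
  finally show ?thesis by (simp add: S_def algebra_simps numeral_eq_Suc)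
qed

lemma card_not_squarefree_degree_le:
  fixes n :: nat
  defines "q \<equiv> real (card (UNIV :: 'a::{finite,field} set))"
  shows "real (card {g :: 'a poly. degree g \<le> n + 2 \<and> \<not> squarefree g}) = q ^ (n + 2) - q + 1"
proof -
  let ?A = "{g :: 'a poly. degree g \<le> n + 2 \<and> squarefree g}"
  let ?B = "{g :: 'a poly. degree g \<le> n + 2 \<and> \<not> squarefree g}"
  have "finite ?A" "finite ?B" by (auto intro: finite_subset[OF _ finite_degree_le])
  then have "card (?A \<union> ?B) = card ?A + card ?B" by (intro card_Un_disjoint) auto
  moreover have "?A \<union> ?B = {g. degree g \<le> n + 2}" by auto
  ultimately have "card (UNIV :: 'a set) ^ Suc (n + 2) = card ?A + card ?B"
    by (metis card_degree_le)
  then have "real (card (UNIV :: 'a set) ^ Suc (n + 2)) = real (card ?A + card ?B)"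
    by (rule arg_cong)
  then have "q ^ Suc (n + 2) = real (card ?A) + real (card ?B)"
    by (simp only: q_def of_nat_add of_nat_power)
  then show ?thesis using card_squarefree_degree_le[of n, where 'a='a] unfolding q_def by (simp add: eval_nat_numeral)
qed

section \<open>Restricting forms to a line\<close>

definition exponents :: "nat \<Rightarrow> (nat \<times> nat \<times> nat) set" where
  "exponents d = {(i, j, k). i + j + k = d}"

lemma finite_exponents: "finite (exponents d)"
  by (rule finite_subset[of _ "{..d} \<times> {..d} \<times> {..d}"]) (auto simp: exponents_def)

definition form_eval :: "'a::comm_ring_1 hpoly \<Rightarrow> nat \<Rightarrow> 'a poly \<Rightarrow> 'a poly \<Rightarrow> 'a poly \<Rightarrow> 'a poly" where
  "form_eval f d X Y Z = (\<Sum>(i, j, k)\<in>exponents d. smult (f (i, j, k)) (X ^ i * Y ^ j * Z ^ k))"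

abbreviation line_x :: "'a \<times> 'a \<times> 'a \<Rightarrow> 'a \<times> 'a \<times> 'a \<Rightarrow> 'a::zero poly" where
  "line_x u v \<equiv> [:fst v, fst u:]"
abbreviation line_y :: "'a \<times> 'a \<times> 'a \<Rightarrow> 'a \<times> 'a \<times> 'a \<Rightarrow> 'a::zero poly" where
  "line_y u v \<equiv> [:fst (snd v), fst (snd u):]"
abbreviation line_z :: "'a \<times> 'a \<times> 'a \<Rightarrow> 'a \<times> 'a \<times> 'a \<Rightarrow> 'a::zero poly" where
  "line_z u v \<equiv> [:snd (snd v), snd (snd u):]"

lemma restrict_line_eq_form_eval:
  "restrict_line f d u v = form_eval f d (line_x u v) (line_y u v) (line_z u v)"
proof -
  define G where "G = (\<lambda>(i, j, k). smult (f (i, j, k))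
      (line_x u v ^ i * line_y u v ^ j * line_z u v ^ k))"
  have "restrict_line f d u v = (\<Sum>(i, j)\<in>(SIGMA i:{..d}. {..d - i}). G (i, j, d - i - j))"
    unfolding restrict_line_def G_def by (simp add: sum.Sigma)
  also have "\<dots> = sum G (exponents d)"
    by (rule sum.reindex_bij_witness[where i = "\<lambda>(i, j, k). (i, j)" and j = "\<lambda>(i, j). (i, j, d - i - j)"])
       (auto simp: exponents_def)
  finally show ?thesis unfolding form_eval_def G_def .
qed

lemma form_eval_add: "form_eval (f + g) d X Y Z = form_eval f d X Y Z + form_eval g d X Y Z"
  unfolding form_eval_def by (simp add: split_def smult_add_left sum.distrib)

lemma smult_sum_right: "smult c (sum g A) = (\<Sum>t\<in>A. smult c (g t))"
  by (induction A rule: infinite_finite_induct) (simp_all add: smult_add_right)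

lemma form_eval_smult: "form_eval (\<lambda>t. c * f t) d X Y Z = smult c (form_eval f d X Y Z)"
  unfolding form_eval_def by (simp add: split_def smult_sum_right)

lemma form_eval_zero: "form_eval 0 d X Y Z = 0"
  unfolding form_eval_def by simp

lemma degree_form_eval_le:
  assumes "degree X \<le> 1" "degree Y \<le> 1" "degree Z \<le> 1"
  shows "degree (form_eval f d X Y Z) \<le> d"
  unfolding form_eval_def
proof (rule degree_sum_le)
  fix t assume "t \<in> exponents d"
  then obtain i j k where t: "t = (i, j, k)" and "i + j + k = d" by (auto simp: exponents_def)
  have "degree (X ^ i * Y ^ j * Z ^ k) \<le> degree X * i + degree Y * j + degree Z * k"
    by (intro order_trans[OF degree_mult_le] add_mono degree_power_le)
  also have "\<dots> \<le> 1 * i + 1 * j + 1 * k" using assms by (intro add_mono mult_right_mono) auto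
  also have "\<dots> = d" using \<open>i + j + k = d\<close> by simp
  finally show "degree (case t of (i, j, k) \<Rightarrow> smult (f (i, j, k)) (X ^ i * Y ^ j * Z ^ k)) \<le> d"
    unfolding t by (auto intro: order_trans[OF degree_smult_le])
qed (rule finite_exponents)

fun mult_monomial :: "nat \<times> nat \<times> nat \<Rightarrow> ('a::zero) hpoly \<Rightarrow> 'a hpoly" where
  "mult_monomial (a, b, c) f (i, j, k) = (if a \<le> i \<and> b \<le> j \<and> c \<le> k then f (i - a, j - b, k - c) else 0)"

lemma mult_monomial_hom_polys:
  "f \<in> hom_polys d \<Longrightarrow> mult_monomial (a, b, c) f \<in> hom_polys (d + a + b + c)"
  unfolding hom_polys_def by auto

lemma exponents_shift_image:
  assumes "(i, j, k) \<in> exponents (d + a + b + c)" "a \<le> i" "b \<le> j" "c \<le> k"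
  shows "(i, j, k) \<in> (\<lambda>(i, j, k). (i + a, j + b, k + c)) ` exponents d"
proof (rule image_eqI)
  show "(i, j, k) = (\<lambda>(i, j, k). (i + a, j + b, k + c)) (i - a, j - b, k - c)" using assms by simp
  show "(i - a, j - b, k - c) \<in> exponents d" using assms by (auto simp: exponents_def)
qed

lemma form_eval_mult_monomial:
  "form_eval (mult_monomial (a, b, c) f) (d + a + b + c) X Y Z = X ^ a * Y ^ b * Z ^ c * form_eval f d X Y Z"
proof -
  let ?shift = "\<lambda>(i, j, k). (i + a, j + b, k + c)"
  let ?term = "\<lambda>g (i, j, k). smult (g (i, j, k)) (X ^ i * Y ^ j * Z ^ k)"
  have "form_eval (mult_monomial (a, b, c) f) (d + a + b + c) X Y Z
      = sum (?term (mult_monomial (a, b, c) f)) (?shift ` exponents d)"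
    unfolding form_eval_def
  proof (rule sum.mono_neutral_right[OF finite_exponents])
    show "?shift ` exponents d \<subseteq> exponents (d + a + b + c)" by (auto simp: exponents_def)
  qed (clarsimp, blast dest: exponents_shift_image)
  also have "\<dots> = sum (?term (mult_monomial (a, b, c) f) \<circ> ?shift) (exponents d)"
    by (rule sum.reindex) (auto simp: inj_on_def)
  also have "\<dots> = (\<Sum>t\<in>exponents d. X ^ a * Y ^ b * Z ^ c * ?term f t)"
    by (rule sum.cong) (auto simp: power_add mult_ac)
  finally show ?thesis by (simp add: form_eval_def sum_distrib_left)
qed

definition form_values :: "nat \<Rightarrow> 'a poly \<Rightarrow> 'a poly \<Rightarrow> 'a poly \<Rightarrow> 'a::comm_ring_1 poly set" where
  "form_values d X Y Z = (\<lambda>f. form_eval f d X Y Z) ` hom_polys d"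

lemma form_values_add:
  "p \<in> form_values d X Y Z \<Longrightarrow> q \<in> form_values d X Y Z \<Longrightarrow> p + q \<in> form_values d X Y Z"
  unfolding form_values_def hom_polys_def
  by (auto simp: form_eval_add[symmetric] intro!: image_eqI[where x = "_ + _"])

lemma form_values_smult: "p \<in> form_values d X Y Z \<Longrightarrow> smult c p \<in> form_values d X Y Z"
  unfolding form_values_def hom_polys_def
  by (auto simp: form_eval_smult[symmetric] intro!: image_eqI[where x = "\<lambda>t. c * _ t"])

lemma form_values_zero: "0 \<in> form_values d X Y Z"
proof -
  have "0 \<in> hom_polys d" by (simp add: hom_polys_def)
  then show ?thesis unfolding form_values_def by (rule rev_image_eqI) (simp add: form_eval_zero)
qed

lemma form_values_sum:
  "(\<And>i. i \<in> A \<Longrightarrow> h i \<in> form_values d X Y Z) \<Longrightarrow> sum h A \<in> form_values d X Y Z"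
  by (induction A rule: infinite_finite_induct) (auto intro: form_values_add form_values_zero)

lemma one_in_form_values: "1 \<in> form_values 0 X Y Z"
  unfolding form_values_def
proof (rule image_eqI)
  let ?f = "\<lambda>t. if t = (0, 0, 0) then 1 else 0"
  have "exponents 0 = {(0, 0, 0)}" by (auto simp: exponents_def)
  then show "1 = form_eval ?f 0 X Y Z" by (simp add: form_eval_def)
  show "?f \<in> hom_polys 0" by (simp add: hom_polys_def)
qed

lemma form_values_mult_monomial:
  "p \<in> form_values d X Y Z \<Longrightarrow> X ^ a * Y ^ b * Z ^ c * p \<in> form_values (d + a + b + c) X Y Z"
  unfolding form_values_def
  by (auto simp: form_eval_mult_monomial[symmetric] intro!: image_eqI mult_monomial_hom_polys)

lemma form_values_mult_linear:
  assumes "p \<in> form_values d X Y Z"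
  shows "(smult a X + smult b Y + smult c Z) * p \<in> form_values (Suc d) X Y Z"
proof -
  have "X * p \<in> form_values (Suc d) X Y Z" "Y * p \<in> form_values (Suc d) X Y Z"
    "Z * p \<in> form_values (Suc d) X Y Z"
    using form_values_mult_monomial[OF assms, of 1 0 0] form_values_mult_monomial[OF assms, of 0 1 0]
      form_values_mult_monomial[OF assms, of 0 0 1] by simp_all
  then show ?thesis by (simp add: distrib_right form_values_add form_values_smult)
qed

lemma form_values_power_mult:
  assumes "L = smult a X + smult b Y + smult c Z" "M = smult a' X + smult b' Y + smult c' Z"
  shows "m \<le> d \<Longrightarrow> L ^ m * M ^ (d - m) \<in> form_values d X Y Z"
proof (induction d arbitrary: m)
  case 0
  then show ?case using one_in_form_values by simp
next
  case (Suc d)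
  show ?case
  proof (cases "m \<le> d")
    case True
    then have "M * (L ^ m * M ^ (d - m)) \<in> form_values (Suc d) X Y Z"
      using Suc.IH assms(2) form_values_mult_linear by blast
    then show ?thesis using True by (simp add: Suc_diff_le mult_ac)
  next
    case False
    then have "L * (L ^ d * M ^ (d - d)) \<in> form_values (Suc d) X Y Z"
      using Suc.IH[of d] assms(1) form_values_mult_linear by blast
    then show ?thesis using False Suc.prems by (simp add: le_Suc_eq)
  qed
qed

lemma form_values_eq_degree_le:
  fixes X Y Z :: "'a::comm_ring_1 poly"
  assumes "degree X \<le> 1" "degree Y \<le> 1" "degree Z \<le> 1"
    and "[:0, 1:] = smult a X + smult b Y + smult c Z" "1 = smult a' X + smult b' Y + smult c' Z"
  shows "form_values d X Y Z = {p. degree p \<le> d}"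
proof
  show "form_values d X Y Z \<subseteq> {p. degree p \<le> d}"
    unfolding form_values_def using degree_form_eval_le[OF assms(1-3)] by auto
  show "{p. degree p \<le> d} \<subseteq> form_values d X Y Z"
  proof
    fix p :: "'a poly" assume "p \<in> {p. degree p \<le> d}"
    then have "p = (\<Sum>i\<le>d. smult (coeff p i) ([:0, 1:] ^ i * 1 ^ (d - i)))"
      using poly_as_sum_of_monoms'[of p d] by (simp add: monom_altdef)
    also have "\<dots> \<in> form_values d X Y Z"
      using form_values_power_mult[OF assms(4,5)] by (intro form_values_sum form_values_smult) simp
    finally show "p \<in> form_values d X Y Z" .
  qed
qed

lemma lin_indep2_swap:
  assumes "lin_indep2 u v"
  shows "lin_indep2 v u"
  unfolding lin_indep2_def
proof (intro allI impI)
  fix a b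
  assume "a * fst v + b * fst u = 0 \<and> a * fst (snd v) + b * fst (snd u) = 0
    \<and> a * snd (snd v) + b * snd (snd u) = 0"
  then have "b * fst u + a * fst v = 0 \<and> b * fst (snd u) + a * fst (snd v) = 0
    \<and> b * snd (snd u) + a * snd (snd v) = 0" by (simp add: add.commute)
  then show "a = 0 \<and> b = 0" using assms unfolding lin_indep2_def by blast
qed

lemma dual_of_nonzero_minor:
  fixes x1 x2 y1 y2 :: "'a::field"
  assumes "x1 * y2 - x2 * y1 \<noteq> 0"
  shows "\<exists>a b. a * x1 + b * x2 = 1 \<and> a * y1 + b * y2 = 0"
proof -
  let ?m = "x1 * y2 - x2 * y1"
  have "y2 * inverse ?m * x1 + - y1 * inverse ?m * x2 = ?m * inverse ?m"
    by (simp add: algebra_simps)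
  then have "y2 * inverse ?m * x1 + - y1 * inverse ?m * x2 = 1" using assms by simp
  moreover have "y2 * inverse ?m * y1 + - y1 * inverse ?m * y2 = 0" by (simp add: algebra_simps)
  ultimately show ?thesis by blast
qed

lemma lin_indep2_dual:
  fixes u v :: "'a::field \<times> 'a \<times> 'a"
  assumes "lin_indep2 u v"
  shows "\<exists>a b c. a * fst u + b * fst (snd u) + c * snd (snd u) = 1
                \<and> a * fst v + b * fst (snd v) + c * snd (snd v) = 0"
proof -
  obtain u1 u2 u3 v1 v2 v3 where uv: "u = (u1, u2, u3)" "v = (v1, v2, v3)" by (cases u, cases v)
  have indep: "a = 0 \<and> b = 0"
    if "a * u1 + b * v1 = 0" "a * u2 + b * v2 = 0" "a * u3 + b * v3 = 0" for a b
  proof -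
    have "\<forall>a b. a * u1 + b * v1 = 0 \<and> a * u2 + b * v2 = 0 \<and> a * u3 + b * v3 = 0 \<longrightarrow> a = 0 \<and> b = 0"
      using assms unfolding lin_indep2_def uv fst_conv snd_conv .
    then show ?thesis using that by blast
  qed
  consider "u1 * v2 - u2 * v1 \<noteq> 0" | "u1 * v3 - u3 * v1 \<noteq> 0" | "u2 * v3 - u3 * v2 \<noteq> 0"
    | "u1 * v2 - u2 * v1 = 0" "u1 * v3 - u3 * v1 = 0" "u2 * v3 - u3 * v2 = 0" by blast
  then show ?thesis
  proof cases
    case 1
    then obtain a b where "a * u1 + b * u2 = 1" "a * v1 + b * v2 = 0" using dual_of_nonzero_minor by blast
    then show ?thesis unfolding uv by (intro exI[of _ a] exI[of _ b] exI[of _ 0]) simp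
  next
    case 2
    then obtain a c where "a * u1 + c * u3 = 1" "a * v1 + c * v3 = 0" using dual_of_nonzero_minor by blast
    then show ?thesis unfolding uv by (intro exI[of _ a] exI[of _ 0] exI[of _ c]) simp
  next
    case 3
    then obtain b c where "b * u2 + c * u3 = 1" "b * v2 + c * v3 = 0" using dual_of_nonzero_minor by blast
    then show ?thesis unfolding uv by (intro exI[of _ 0] exI[of _ b] exI[of _ c]) simp
  next
    case 4
    \<comment> \<open>All minors vanish, so each v_k u - u_k v is zero and independence forces u = 0.\<close>
    have "v1 * u2 + - u1 * v2 = 0" "v1 * u3 + - u1 * v3 = 0" "v2 * u1 + - u2 * v1 = 0"
      "v2 * u3 + - u2 * v3 = 0" "v3 * u1 + - u3 * v1 = 0" "v3 * u2 + - u3 * v2 = 0"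
      using 4 by (simp_all add: algebra_simps)
    then have "u1 = 0" "u2 = 0" "u3 = 0"
      using indep[of v1 "- u1"] indep[of v2 "- u2"] indep[of v3 "- u3"] by (simp_all add: mult.commute)
    then show ?thesis using indep[of 1 0] by simp
  qed
qed

lemma restrict_line_image:
  assumes "lin_indep2 u v"
  shows "(\<lambda>f. restrict_line f d u v) ` hom_polys d = {p. degree p \<le> d}"
proof -
  have line_form: "smult a (line_x u v) + smult b (line_y u v) + smult c (line_z u v)
      = [:a * fst v + b * fst (snd v) + c * snd (snd v), a * fst u + b * fst (snd u) + c * snd (snd u):]"
    for a b c by simp
  obtain a b c where "[:0, 1:] = smult a (line_x u v) + smult b (line_y u v) + smult c (line_z u v)"
    using lin_indep2_dual[OF assms] unfolding line_form by auto
  moreover obtain a' b' c' where "1 = smult a' (line_x u v) + smult b' (line_y u v) + smult c' (line_z u v)"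
    using lin_indep2_dual[OF lin_indep2_swap[OF assms]] unfolding line_form by (auto simp: one_pCons)
  ultimately have "form_values d (line_x u v) (line_y u v) (line_z u v) = {p. degree p \<le> d}"
    by (intro form_values_eq_degree_le) (auto simp: degree_pCons_le)
  then show ?thesis by (simp add: form_values_def restrict_line_eq_form_eval)
qed

section \<open>Counting forms through their restrictions\<close>

lemma card_fibre_additive:
  fixes R :: "'a::ab_group_add \<Rightarrow> 'b::ab_group_add"
  assumes add: "\<And>x y. x \<in> H \<Longrightarrow> y \<in> H \<Longrightarrow> x + y \<in> H"
    and diff: "\<And>x y. x \<in> H \<Longrightarrow> y \<in> H \<Longrightarrow> x - y \<in> H"
    and R_add: "\<And>x y. x \<in> H \<Longrightarrow> y \<in> H \<Longrightarrow> R (x + y) = R x + R y"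
    and "y \<in> R ` H"
  shows "card {x \<in> H. R x = y} = card {x \<in> H. R x = 0}"
proof -
  let ?K = "{x \<in> H. R x = 0}"
  obtain x0 where x0: "x0 \<in> H" "R x0 = y" using \<open>y \<in> R ` H\<close> by blast
  have "{x \<in> H. R x = y} = (\<lambda>k. x0 + k) ` ?K"
  proof (rule set_eqI, rule iffI)
    fix x assume "x \<in> {x \<in> H. R x = y}"
    then have "x \<in> H" "R x = y" by auto
    then have "x - x0 \<in> ?K" using R_add[OF diff[OF \<open>x \<in> H\<close> x0(1)] x0(1)] x0 diff by auto
    then show "x \<in> (\<lambda>k. x0 + k) ` ?K" by (rule rev_image_eqI) simp
  next
    fix x assume "x \<in> (\<lambda>k. x0 + k) ` ?K"
    then show "x \<in> {x \<in> H. R x = y}" using add R_add x0 by auto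
  qed
  then show ?thesis by (simp add: card_image)
qed

lemma card_preimage_additive:
  fixes R :: "'a::ab_group_add \<Rightarrow> 'b::ab_group_add"
  assumes "finite H"
    and "\<And>x y. x \<in> H \<Longrightarrow> y \<in> H \<Longrightarrow> x + y \<in> H"
    and "\<And>x y. x \<in> H \<Longrightarrow> y \<in> H \<Longrightarrow> x - y \<in> H"
    and "\<And>x y. x \<in> H \<Longrightarrow> y \<in> H \<Longrightarrow> R (x + y) = R x + R y"
  shows "card {x \<in> H. P (R x)} = card {y \<in> R ` H. P y} * card {x \<in> H. R x = 0}"
proof -
  have "(\<Sum>y\<in>{y \<in> R ` H. P y}. \<Sum>x\<in>{x \<in> {x \<in> H. P (R x)}. R x = y}. 1 :: nat)
      = (\<Sum>x\<in>{x \<in> H. P (R x)}. 1)"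
    by (rule sum.group) (use \<open>finite H\<close> in auto)
  then have "card {x \<in> H. P (R x)} = (\<Sum>y\<in>{y \<in> R ` H. P y}. card {x \<in> {x \<in> H. P (R x)}. R x = y})"
    by simp
  also have "\<dots> = (\<Sum>y\<in>{y \<in> R ` H. P y}. card {x \<in> H. R x = 0})"
  proof (rule sum.cong)
    fix y assume "y \<in> {y \<in> R ` H. P y}"
    then have "{x \<in> {x \<in> H. P (R x)}. R x = y} = {x \<in> H. R x = y}" "y \<in> R ` H" by auto
    then show "card {x \<in> {x \<in> H. P (R x)}. R x = y} = card {x \<in> H. R x = 0}"
      using card_fibre_additive[OF assms(2-4)] by simp
  qed simp
  finally show ?thesis by simp
qed

lemma finite_hom_polys: "finite (hom_polys d :: ('a::{finite,zero}) hpoly set)"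
proof -
  let ?D = "{..d} \<times> {..d} \<times> {..d}"
  have "hom_polys d \<subseteq> {f :: 'a hpoly. \<forall>x. (x \<in> ?D \<longrightarrow> f x \<in> UNIV) \<and> (x \<notin> ?D \<longrightarrow> f x = 0)}"
    unfolding hom_polys_def by force
  moreover have "finite {f :: 'a hpoly. \<forall>x. (x \<in> ?D \<longrightarrow> f x \<in> UNIV) \<and> (x \<notin> ?D \<longrightarrow> f x = 0)}"
    by (rule finite_set_of_finite_funs) auto
  ultimately show ?thesis by (rule finite_subset)
qed

lemma card_restrict_line_preimage:
  fixes u v :: "'a::{finite,field} \<times> 'a \<times> 'a"
  assumes "lin_indep2 u v"
  shows "card {f \<in> hom_polys d. P (restrict_line f d u v)}
       = card {g. degree g \<le> d \<and> P g} * card {f \<in> hom_polys d. restrict_line f d u v = 0}"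
proof -
  have "card {f \<in> hom_polys d. P (restrict_line f d u v)}
      = card {g \<in> (\<lambda>f. restrict_line f d u v) ` hom_polys d. P g}
        * card {f \<in> hom_polys d. restrict_line f d u v = 0}"
    by (rule card_preimage_additive[OF finite_hom_polys])
       (simp_all add: hom_polys_def restrict_line_eq_form_eval form_eval_add)
  then show ?thesis by (simp add: restrict_line_image[OF assms])
qed

lemma mult2_off_P_ratio:
  fixes u v :: "'a::{finite,field} \<times> 'a \<times> 'a"
  assumes "lin_indep2 u v"
  shows "real (card {f \<in> hom_polys d. mult2_off_P d u v f}) / real (card (hom_polys d :: 'a hpoly set))
       = real (card {g :: 'a poly. degree g \<le> d \<and> \<not> squarefree g}) / real (card (UNIV :: 'a set)) ^ Suc d"
proof -
  let ?K = "{f \<in> hom_polys d. restrict_line f d u v = 0} :: 'a hpoly set"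
  have "0 \<in> ?K" by (simp add: hom_polys_def restrict_line_eq_form_eval form_eval_zero)
  then have "card ?K > 0" using finite_hom_polys[of d, where 'a='a] by (auto simp: card_gt_0_iff)
  moreover have "card {f \<in> hom_polys d. mult2_off_P d u v f}
      = card {g :: 'a poly. degree g \<le> d \<and> \<not> squarefree g} * card ?K"
    unfolding mult2_off_P_def not_squarefree_poly_iff[symmetric]
    by (rule card_restrict_line_preimage[OF assms])
  moreover have "card (hom_polys d :: 'a hpoly set) = card (UNIV :: 'a set) ^ Suc d * card ?K"
    using card_restrict_line_preimage[OF assms, of d "\<lambda>_. True"] by (simp add: card_degree_le)
  ultimately show ?thesis by (simp add: field_simps)
qed

theorem mainTheorem9:
  fixes u v :: "'a::{finite,field} \<times> 'a \<times> 'a"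
  assumes "lin_indep2 u v"
  shows "(\<lambda>d. real (card {f \<in> hom_polys d. mult2_off_P d u v f}) / real (card (hom_polys d :: 'a hpoly set)))
           \<longlonglongrightarrow> (1 / real (card (UNIV :: 'a set)))"
proof -
  define q where "q = real (card (UNIV :: 'a set))"
  have "card {0, 1 :: 'a} \<le> card (UNIV :: 'a set)" by (rule card_mono) simp_all
  then have "q \<ge> 2" by (simp add: q_def)
  have ratio: "real (card {f \<in> hom_polys (n + 2). mult2_off_P (n + 2) u v f})
      / real (card (hom_polys (n + 2) :: 'a hpoly set)) = 1 / q - (q - 1) / q ^ 3 * (1 / q) ^ n" for n
    using \<open>q \<ge> 2\<close> unfolding mult2_off_P_ratio[OF assms] card_not_squarefree_degree_le q_def[symmetric]
    by (simp add: field_simps power_add eval_nat_numeral)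
  have "(\<lambda>n. 1 / q - (q - 1) / q ^ 3 * (1 / q) ^ n) \<longlonglongrightarrow> 1 / q - 0"
    using \<open>q \<ge> 2\<close> by (intro tendsto_diff tendsto_const tendsto_mult_right_zero LIMSEQ_realpow_zero) auto
  then have "(\<lambda>n. real (card {f \<in> hom_polys (n + 2). mult2_off_P (n + 2) u v f})
      / real (card (hom_polys (n + 2) :: 'a hpoly set))) \<longlonglongrightarrow> 1 / q"
    unfolding ratio by simp
  then show ?thesis unfolding q_def by (rule LIMSEQ_offset)
qed

end
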